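(* Let $n$ be a positive integer, let $\mathcal F$ be an $\mathcal N$-saturated family of subsets of $[n]$, and let $A_1,\dots,A_k$ and $B_1,\dots,B_l$ be elements of $\mathcal F$, where $k,l\ge 1$. If $\bigcap_{i=1}^k A_i\notin\mathcal F$, then in every induced copy of $\mathcal N$ in $\mathcal F\cup\{\bigcap_{i=1}^k A_i\}$ that contains $\bigcap_{i=1}^k A_i$, this set is a minimal element of the copy; moreover there is such an induced copy in which $\bigcap_{i=1}^k A_i$ is the minimal element that is comparable to both maximal elements. Similarly, if $\bigcup_{i=1}^l B_i\notin\mathcal F$, then in every induced copy of $\mathcal N$ in $\mathcal F\cup\{\bigcup_{i=1}^l B_i\}$ containing $\bigcup_{i=1}^l B_i$, this set is a maximal element of the copy; moreover there is such an induced copy in which $\bigcup_{i=1}^l B_i$ is the maximal element that is comparable to both minimal elements.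
   Context: The poset $\mathcal N$ has four elements $a,b,c,d$ with $a<c$, $b<c$, $b<d$ and no other comparabilities (so $a,b$ are its minimal elements, $c,d$ its maximal elements; $c$ is the unique maximal element comparable to both minimal elements and $b$ the unique minimal element comparable to both maximal elements). A family $\mathcal Q$ of sets (ordered by inclusion) contains an induced copy of $\mathcal N$ if there are distinct sets in $\mathcal Q$ whose inclusion relations are exactly those of $a,b,c,d$ above. A family $\mathcal F$ of subsets of $[n]=\{1,\dots,n\}$ is $\mathcal N$-saturated if $\mathcal F$ contains no induced copy of $\mathcal N$, but for every $S\subseteq[n]$ with $S\notin\mathcal F$, the family $\mathcal F\cup\{S\}$ contains an induced copy of $\mathcal N$. *)

theory Defs
  imports Main
begin

text \<open>An induced copy of the poset N in a family Q, given by the tuple (a,b,c,d):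
  a, b minimal; c, d maximal; a < c, b < c, b < d, and no other comparabilities.\<close>
definition induced_N :: "'a set set \<Rightarrow> 'a set \<Rightarrow> 'a set \<Rightarrow> 'a set \<Rightarrow> 'a set \<Rightarrow> bool" where
  "induced_N Q a b c d \<longleftrightarrow>
     a \<in> Q \<and> b \<in> Q \<and> c \<in> Q \<and> d \<in> Q \<and>
     distinct [a, b, c, d] \<and>
     a \<subset> c \<and> b \<subset> c \<and> b \<subset> d \<and>
     \<not> a \<subseteq> b \<and> \<not> b \<subseteq> a \<and>
     \<not> a \<subseteq> d \<and> \<not> d \<subseteq> a \<and>
     \<not> c \<subseteq> d \<and> \<not> d \<subseteq> c"

definition contains_induced_N :: "'a set set \<Rightarrow> bool" where
  "contains_induced_N Q \<longleftrightarrow> (\<exists>a b c d. induced_N Q a b c d)"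

definition N_saturated :: "nat \<Rightarrow> nat set set \<Rightarrow> bool" where
  "N_saturated n F \<longleftrightarrow>
     F \<subseteq> Pow {1..n} \<and> \<not> contains_induced_N F \<and>
     (\<forall>S. S \<subseteq> {1..n} \<and> S \<notin> F \<longrightarrow> contains_induced_N (insert S F))"

end

theory Submission
  imports Defs
begin

text \<open>Let X be the intersection of a subfamily S of an N-free family F. If X were the maximal element c, some T in S would miss d, and
  (a, b, T, d) would be a copy inside F; dually if X were d. If X is the minimal element a,
  pick T in S missing b: either T lies below c, and (T, b, c, d) is a copy inside F, or
  (b, X, c, T) is a copy with X below both maximal elements. Complementation reverses
  inclusion and turns unions into intersections, which gives the union case.\<close>

lemma induced_N_iff:
  "induced_N Q a b c d \<longleftrightarrow>
     a \<in> Q \<and> b \<in> Q \<and> c \<in> Q \<and> d \<in> Q \<and> a \<subseteq> c \<and> b \<subseteq> c \<and> b \<subseteq> d \<and>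
     \<not> a \<subseteq> b \<and> \<not> b \<subseteq> a \<and> \<not> a \<subseteq> d \<and> \<not> d \<subseteq> a \<and> \<not> c \<subseteq> d \<and> \<not> d \<subseteq> c"
  unfolding induced_N_def by auto

lemma induced_N_insert_new_mem:
  assumes "\<not> contains_induced_N F" and "induced_N (insert X F) a b c d"
  shows "X \<in> {a, b, c, d}"
  using assms unfolding contains_induced_N_def induced_N_def by blast

lemma Inter_minimal_in_induced_N:
  assumes noN: "\<not> contains_induced_N F" and "S \<subseteq> F" and X: "X = \<Inter>S"
    and N: "induced_N (insert X F) a b c d"
  shows "X = a \<or> X = b"
proof (rule ccontr)
  assume not_min: "\<not> (X = a \<or> X = b)"
  then have "X = c \<or> X = d"
    using induced_N_insert_new_mem[OF noN N] by blast
  then show False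
  proof
    assume "X = c"
    with N have "\<not> d \<subseteq> X" unfolding induced_N_iff by blast
    then obtain T where "T \<in> S" "\<not> d \<subseteq> T" using X by blast
    with \<open>S \<subseteq> F\<close> X have "X \<subseteq> T" "T \<in> F" by auto
    with N \<open>X = c\<close> \<open>\<not> d \<subseteq> T\<close> not_min have "induced_N F a b T d"
      unfolding induced_N_iff by auto
    with noN show False unfolding contains_induced_N_def by blast
  next
    assume "X = d"
    with N have "\<not> a \<subseteq> X" unfolding induced_N_iff by blast
    then obtain T where "T \<in> S" "\<not> a \<subseteq> T" using X by blast
    with \<open>S \<subseteq> F\<close> X have "X \<subseteq> T" "T \<in> F" by auto
    with N \<open>X = d\<close> \<open>\<not> a \<subseteq> T\<close> not_min have "induced_N F a b c T"
      unfolding induced_N_iff by auto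
    with noN show False unfolding contains_induced_N_def by blast
  qed
qed

lemma Inter_common_lower_in_some_induced_N:
  assumes noN: "\<not> contains_induced_N F" and "S \<subseteq> F" and X: "X = \<Inter>S"
    and "contains_induced_N (insert X F)"
  shows "\<exists>a c d. induced_N (insert X F) a X c d"
proof -
  obtain a b c d where N: "induced_N (insert X F) a b c d"
    using \<open>contains_induced_N (insert X F)\<close> unfolding contains_induced_N_def by blast
  from Inter_minimal_in_induced_N[OF noN \<open>S \<subseteq> F\<close> X N]
  show ?thesis
  proof
    assume "X = b"
    with N show ?thesis by blast
  next
    assume "X = a"
    with N have "\<not> b \<subseteq> X" unfolding induced_N_iff by blast
    then obtain T where "T \<in> S" "\<not> b \<subseteq> T" using X by blast
    with \<open>S \<subseteq> F\<close> X have T: "X \<subseteq> T" "T \<in> F" by auto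
    show ?thesis
    proof (cases "T \<subseteq> c")
      case True
      with N \<open>X = a\<close> T \<open>\<not> b \<subseteq> T\<close> have "induced_N F T b c d"
        unfolding induced_N_iff by auto
      with noN show ?thesis unfolding contains_induced_N_def by blast
    next
      case False
      with N \<open>X = a\<close> T \<open>\<not> b \<subseteq> T\<close> have "induced_N (insert X F) b X c T"
        unfolding induced_N_iff by auto
      then show ?thesis by blast
    qed
  qed
qed

lemma induced_N_image_Compl:
  "induced_N (uminus ` Q) (- d) (- c) (- b) (- a) \<longleftrightarrow> induced_N Q a b c d"
  unfolding induced_N_iff by (auto simp: image_iff)

lemma contains_induced_N_image_Compl:
  "contains_induced_N (uminus ` Q) \<longleftrightarrow> contains_induced_N Q"
  unfolding contains_induced_N_def
  by (metis induced_N_image_Compl double_compl)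

lemma Union_maximal_in_induced_N:
  assumes "\<not> contains_induced_N F" and "S \<subseteq> F" and Y: "Y = \<Union>S"
    and "induced_N (insert Y F) a b c d"
  shows "Y = c \<or> Y = d"
proof -
  have "- Y = - d \<or> - Y = - c"
  proof (rule Inter_minimal_in_induced_N)
    show "\<not> contains_induced_N (uminus ` F)"
      using assms(1) by (simp add: contains_induced_N_image_Compl)
    show "uminus ` S \<subseteq> uminus ` F" using \<open>S \<subseteq> F\<close> by blast
    show "- Y = \<Inter>(uminus ` S)" using Y by (simp add: uminus_Sup)
    show "induced_N (insert (- Y) (uminus ` F)) (- d) (- c) (- b) (- a)"
      using assms(4) induced_N_image_Compl[of "insert Y F"] by simp
  qed
  then show ?thesis by auto
qed

lemma Union_common_upper_in_some_induced_N:
  assumes "\<not> contains_induced_N F" and "S \<subseteq> F" and Y: "Y = \<Union>S"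
    and "contains_induced_N (insert Y F)"
  shows "\<exists>a b d. induced_N (insert Y F) a b Y d"
proof -
  have "\<exists>a c d. induced_N (insert (- Y) (uminus ` F)) a (- Y) c d"
  proof (rule Inter_common_lower_in_some_induced_N)
    show "\<not> contains_induced_N (uminus ` F)"
      using assms(1) by (simp add: contains_induced_N_image_Compl)
    show "uminus ` S \<subseteq> uminus ` F" using \<open>S \<subseteq> F\<close> by blast
    show "- Y = \<Inter>(uminus ` S)" using Y by (simp add: uminus_Sup)
    show "contains_induced_N (insert (- Y) (uminus ` F))"
      using assms(4) contains_induced_N_image_Compl[of "insert Y F"] by simp
  qed
  then obtain a c d where "induced_N (insert (- Y) (uminus ` F)) a (- Y) c d"
    by blast
  then have "induced_N (insert Y F) (- d) (- c) Y (- a)"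
    using induced_N_image_Compl[of "insert Y F" "- a" Y "- c" "- d"] by simp
  then show ?thesis by blast
qed

theorem lemma2p2:
  fixes n k l :: nat and F :: "nat set set" and A B :: "nat \<Rightarrow> nat set"
  assumes "n \<ge> 1" and "N_saturated n F"
    and "k \<ge> 1" and "l \<ge> 1"
    and "\<forall>i\<in>{1..k}. A i \<in> F" and "\<forall>i\<in>{1..l}. B i \<in> F"
  shows "((\<Inter>i\<in>{1..k}. A i) \<notin> F \<longrightarrow>
            (\<forall>a b c d. induced_N (insert (\<Inter>i\<in>{1..k}. A i) F) a b c d \<and>
                 (\<Inter>i\<in>{1..k}. A i) \<in> {a, b, c, d}
               \<longrightarrow> (\<Inter>i\<in>{1..k}. A i) = a \<or> (\<Inter>i\<in>{1..k}. A i) = b) \<and>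
            (\<exists>a c d. induced_N (insert (\<Inter>i\<in>{1..k}. A i) F) a (\<Inter>i\<in>{1..k}. A i) c d))
       \<and> ((\<Union>i\<in>{1..l}. B i) \<notin> F \<longrightarrow>
            (\<forall>a b c d. induced_N (insert (\<Union>i\<in>{1..l}. B i) F) a b c d \<and>
                 (\<Union>i\<in>{1..l}. B i) \<in> {a, b, c, d}
               \<longrightarrow> (\<Union>i\<in>{1..l}. B i) = c \<or> (\<Union>i\<in>{1..l}. B i) = d) \<and>
            (\<exists>a b d. induced_N (insert (\<Union>i\<in>{1..l}. B i) F) a b (\<Union>i\<in>{1..l}. B i) d))"
proof -
  from assms(2) have noN: "\<not> contains_induced_N F" and "F \<subseteq> Pow {1..n}"
    and extend: "\<And>X. X \<subseteq> {1..n} \<Longrightarrow> X \<notin> F \<Longrightarrow> contains_induced_N (insert X F)"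
    unfolding N_saturated_def by blast+
  have A: "A ` {1..k} \<subseteq> F" and B: "B ` {1..l} \<subseteq> F"
    using assms(5,6) by blast+
  define X where "X = (\<Inter>i\<in>{1..k}. A i)"
  define Y where "Y = (\<Union>i\<in>{1..l}. B i)"
  have "X \<subseteq> A 1"
    unfolding X_def using \<open>k \<ge> 1\<close> by (intro INT_lower) simp
  moreover have "A 1 \<in> F"
    using A \<open>k \<ge> 1\<close> by auto
  moreover have "Y \<subseteq> \<Union>F"
    unfolding Y_def using B by blast
  ultimately have "X \<subseteq> {1..n}" and "Y \<subseteq> {1..n}"
    using \<open>F \<subseteq> Pow {1..n}\<close> by blast+
  then show ?thesis
    unfolding X_def[symmetric] Y_def[symmetric]
    using Inter_minimal_in_induced_N[OF noN A X_def]
      Inter_common_lower_in_some_induced_N[OF noN A X_def extend]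
      Union_maximal_in_induced_N[OF noN B Y_def]
      Union_common_upper_in_some_induced_N[OF noN B Y_def extend]
    by meson
qed

end
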